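(* Let $k\ge 2$ and $b>0$. There exists a constant $c>0$ depending only on $k$ and $b$ such that for every finite set $Z$ and every $S\subseteq\{0,1,\dots,k\}^Z$ with $F_S\ge k^{b|Z|}$, there exists $W\subseteq Z$ with $|W|\ge c|Z|$ and $S|_W\supseteq\{1,\dots,k\}^W$.
   Context: For a finite set $Z$, let ${\mathcal U}$ be the cover of $\{0,1,\dots,k\}^Z$ consisting of all sets of the form $\prod_{z\in Z}\{i_z\}^{\rm c}$ (complement taken in $\{0,1,\dots,k\}$) with $1\le i_z\le k$ for each $z\in Z$. For $S\subseteq\{0,1,\dots,k\}^Z$, $F_S$ denotes the minimal number of sets in ${\mathcal U}$ needed to cover $S$. $S|_W$ denotes the set of restrictions to $W$ of the elements of $S$. *)

theory Defs
  imports "HOL-Analysis.Analysis"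
begin

definition cube :: "nat \<Rightarrow> 'a set \<Rightarrow> ('a \<Rightarrow> nat) set" where
  "cube k Z = PiE Z (\<lambda>_. {0..k})"

definition cover_set :: "nat \<Rightarrow> 'a set \<Rightarrow> ('a \<Rightarrow> nat) \<Rightarrow> ('a \<Rightarrow> nat) set" where
  "cover_set k Z i = PiE Z (\<lambda>z. {0..k} - {i z})"

definition cover_U :: "nat \<Rightarrow> 'a set \<Rightarrow> ('a \<Rightarrow> nat) set set" where
  "cover_U k Z = cover_set k Z ` PiE Z (\<lambda>_. {1..k})"

definition F_num :: "nat \<Rightarrow> 'a set \<Rightarrow> ('a \<Rightarrow> nat) set \<Rightarrow> nat" where
  "F_num k Z S = (LEAST n. \<exists>\<V>. \<V> \<subseteq> cover_U k Z \<and> finite \<V> \<and> card \<V> = n \<and> S \<subseteq> \<Union>\<V>)"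

definition restr_set :: "('a \<Rightarrow> nat) set \<Rightarrow> 'a set \<Rightarrow> ('a \<Rightarrow> nat) set" where
  "restr_set S W = (\<lambda>x. restrict x W) ` S"

end

theory Submission
  imports Defs
begin

(* Call W \<subseteq> Z shattered by S if S|_W \<supseteq> {1..k}^W, and let s(S) be the number of such W.
   For every \<gamma> \<ge> 1, S is covered by at most s(S)^\<gamma> (1 + ((k-1)/k)^\<gamma>)^|Z| members of U.
   This goes by induction on Z: for a new coordinate z some fibre S_v = {x \<in> S. x z = v}
   carries at most a (k-1)/k share of the shattered sets, because a set shattered by every
   fibre stays shattered after adding z.  Covers of S_v and of S - S_v over the remaining
   coordinates are lifted by setting the z-coordinate to some w \<noteq> v and to v respectively.
   If no shattered set has c|Z| elements, then s(S) \<le> (1+y)^|Z| / y^(c|Z|) for all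
   0 < y \<le> 1; choosing \<gamma> large, then y small, then c small makes the cover smaller
   than k^(b|Z|). *)

lemma sum_card_le_card_Inter:
  assumes "finite U" "finite V" "\<And>v. v \<in> V \<Longrightarrow> T v \<subseteq> U"
  shows "(\<Sum>v\<in>V. card (T v)) \<le> (card V - 1) * card U + card (U \<inter> (\<Inter>v\<in>V. T v))"
proof -
  have "(\<Sum>v\<in>V. card (T v)) = (\<Sum>v\<in>V. \<Sum>u\<in>U. of_bool (u \<in> T v))"
    using assms by (auto intro!: sum.cong simp: Int_absorb1)
  also have "\<dots> = (\<Sum>u\<in>U. \<Sum>v\<in>V. of_bool (u \<in> T v))"
    by (rule sum.swap)
  also have "\<dots> \<le> (\<Sum>u\<in>U. (card V - 1) + of_bool (u \<in> (\<Inter>v\<in>V. T v)))"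
  proof (rule sum_mono)
    fix u
    show "(\<Sum>v\<in>V. of_bool (u \<in> T v)) \<le> (card V - 1) + of_bool (u \<in> (\<Inter>v\<in>V. T v))"
    proof (cases "u \<in> (\<Inter>v\<in>V. T v)")
      case True
      then show ?thesis using assms(2) by (simp add: card_mono)
    next
      case False
      then obtain v where "v \<in> V" "u \<notin> T v" by blast
      then have "V \<inter> {v. u \<in> T v} \<subseteq> V - {v}" by blast
      then have "card (V \<inter> {v. u \<in> T v}) \<le> card V - 1"
        using assms(2) \<open>v \<in> V\<close> by (metis card_Diff_singleton card_mono finite_Diff)
      with False show ?thesis using assms(2) by simp
    qed
  qed
  also have "\<dots> = (card V - 1) * card U + card (U \<inter> (\<Inter>v\<in>V. T v))"
    using assms(1) by (simp add: sum.distrib Int_def)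
  finally show ?thesis .
qed

lemma card_small_subsets_le:
  fixes y m :: real
  assumes "finite Z" "\<T> \<subseteq> Pow Z" "0 < y" "y \<le> 1"
    and small: "\<And>W. W \<in> \<T> \<Longrightarrow> real (card W) \<le> m"
  shows "real (card \<T>) \<le> (1 + y) ^ card Z / y powr m"
proof -
  have "real (card \<T>) * y powr m = (\<Sum>W\<in>\<T>. y powr m)"
    by simp
  also have "\<dots> \<le> (\<Sum>W\<in>\<T>. y ^ card W)"
    using small assms(3,4) by (intro sum_mono) (simp add: powr_mono' flip: powr_realpow)
  also have "\<dots> \<le> (\<Sum>W\<in>Pow Z. y ^ card W)"
    using assms(1-3) by (intro sum_mono2) auto
  also have "\<dots> = (\<Prod>z\<in>Z. y + 1)"
    using prod_add[OF assms(1), of "\<lambda>_. y" "\<lambda>_. 1"] by simp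
  also have "\<dots> = (1 + y) ^ card Z"
    by (simp add: add.commute)
  finally show ?thesis
    using assms(3) by (simp add: pos_le_divide_eq)
qed

definition shattered_sets :: "nat \<Rightarrow> 'a set \<Rightarrow> ('a \<Rightarrow> nat) set \<Rightarrow> 'a set set" where
  "shattered_sets k Z S = {W. W \<subseteq> Z \<and> PiE W (\<lambda>_. {1..k}) \<subseteq> restr_set S W}"

lemma finite_shattered_sets: "finite Z \<Longrightarrow> finite (shattered_sets k Z S)"
  by (rule finite_subset[of _ "Pow Z"]) (auto simp: shattered_sets_def)

lemma restr_set_mono: "S' \<subseteq> S \<Longrightarrow> restr_set S' W \<subseteq> restr_set S W"
  by (auto simp: restr_set_def)

lemma shattered_sets_mono: "S' \<subseteq> S \<Longrightarrow> shattered_sets k Z S' \<subseteq> shattered_sets k Z S"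
  unfolding shattered_sets_def using restr_set_mono by blast

lemma restr_set_restr_set: "W \<subseteq> Z \<Longrightarrow> restr_set (restr_set S Z) W = restr_set S W"
  by (simp add: restr_set_def image_image Int_absorb1)

lemma shattered_sets_restr_subset:
  assumes "S' \<subseteq> S" "Z' \<subseteq> Z"
  shows "shattered_sets k Z' (restr_set S' Z') \<subseteq> shattered_sets k Z S"
proof
  fix W assume "W \<in> shattered_sets k Z' (restr_set S' Z')"
  then have W: "W \<subseteq> Z'" "PiE W (\<lambda>_. {1..k}) \<subseteq> restr_set S' W"
    by (auto simp: shattered_sets_def restr_set_restr_set)
  have "PiE W (\<lambda>_. {1..k}) \<subseteq> restr_set S W"
    using W(2) restr_set_mono[OF assms(1)] by (rule order_trans)
  with W(1) assms(2) show "W \<in> shattered_sets k Z S"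
    by (auto simp: shattered_sets_def)
qed

lemma shattered_sets_empty: "S \<noteq> {} \<Longrightarrow> shattered_sets k {} S = {{}}"
proof -
  assume "S \<noteq> {}"
  then have "restr_set S {} = {\<lambda>_. undefined}"
    by (auto simp: restr_set_def restrict_def)
  then show ?thesis
    by (auto simp: shattered_sets_def)
qed

lemma insert_in_shattered_sets:
  assumes "z \<notin> Z" "k \<ge> 1"
    and fibres: "\<And>v. v \<in> {1..k} \<Longrightarrow> W \<in> shattered_sets k Z (restr_set {x\<in>S. x z = v} Z)"
  shows "insert z W \<in> shattered_sets k (insert z Z) S"
proof -
  have WZ: "W \<subseteq> Z" using fibres[of 1] assms(2) by (simp add: shattered_sets_def)
  then have "z \<notin> W" using assms(1) by blast
  have "q \<in> restr_set S (insert z W)" if q: "q \<in> PiE (insert z W) (\<lambda>_. {1..k})" for q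
  proof -
    have "restrict q W \<in> PiE W (\<lambda>_. {1..k})" "q z \<in> {1..k}"
      using q by auto
    then have "restrict q W \<in> restr_set (restr_set {x\<in>S. x z = q z} Z) W"
      using fibres[of "q z"] unfolding shattered_sets_def by blast
    then obtain x where x: "x \<in> S" "x z = q z" "restrict q W = restrict x W"
      unfolding restr_set_restr_set[OF WZ] by (auto simp: restr_set_def)
    have "q = (restrict q W)(z := q z)"
      using q \<open>z \<notin> W\<close> by (metis PiE_restrict fun_upd_triv restrict_upd)
    also have "\<dots> = restrict x (insert z W)"
      using x \<open>z \<notin> W\<close> by (metis fun_upd_triv restrict_upd)
    finally show ?thesis using x(1) by (auto simp: restr_set_def)
  qed
  then show ?thesis using WZ by (auto simp: shattered_sets_def)
qed

lemma card_shattered_sets_insert_ge: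
  assumes "finite Z" "z \<notin> Z" "k \<ge> 1"
  shows "card (shattered_sets k Z (restr_set S Z))
       + card (shattered_sets k Z (restr_set S Z)
               \<inter> (\<Inter>v\<in>{1..k}. shattered_sets k Z (restr_set {x\<in>S. x z = v} Z)))
     \<le> card (shattered_sets k (insert z Z) S)"
proof -
  define T where "T = shattered_sets k Z (restr_set S Z)"
  define C where "C = T \<inter> (\<Inter>v\<in>{1..k}. shattered_sets k Z (restr_set {x\<in>S. x z = v} Z))"
  have z: "z \<notin> W" if "W \<in> T" for W
    using that assms(2) by (auto simp: T_def shattered_sets_def)
  have "C \<subseteq> T" by (simp add: C_def)
  then have disj: "T \<inter> insert z ` C = {}" and inj: "inj_on (insert z) C"
    using z by (fastforce, meson inj_onI insert_ident subsetD)
  have T: "T \<subseteq> shattered_sets k (insert z Z) S"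
    unfolding T_def by (rule shattered_sets_restr_subset) auto
  have C: "insert z ` C \<subseteq> shattered_sets k (insert z Z) S"
    unfolding C_def using insert_in_shattered_sets[OF assms(2,3)] by blast
  have fin: "finite T" using assms(1) by (simp add: T_def finite_shattered_sets)
  have "card T + card C = card (T \<union> insert z ` C)"
    using fin disj inj \<open>C \<subseteq> T\<close> by (simp add: card_Un_disjoint card_image finite_subset)
  also have "\<dots> \<le> card (shattered_sets k (insert z Z) S)"
    using T C assms(1) by (intro card_mono finite_shattered_sets) auto
  finally show ?thesis by (simp add: T_def C_def)
qed

lemma ex_fibre_few_shattered_sets:
  assumes "finite Z" "z \<notin> Z" "k \<ge> 2"
  shows "\<exists>v\<in>{1..k}. real (card (shattered_sets k Z (restr_set {x\<in>S. x z = v} Z)))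
           \<le> (real k - 1) / real k * real (card (shattered_sets k (insert z Z) S))"
proof -
  define f where "f v = card (shattered_sets k Z (restr_set {x\<in>S. x z = v} Z))" for v
  define t where "t = card (shattered_sets k (insert z Z) S)"
  let ?T = "shattered_sets k Z (restr_set S Z)"
  let ?C = "?T \<inter> (\<Inter>v\<in>{1..k}. shattered_sets k Z (restr_set {x\<in>S. x z = v} Z))"
  have "sum f {1..k} \<le> (card {1..k} - 1) * card ?T + card ?C"
    unfolding f_def using assms(1)
    by (intro sum_card_le_card_Inter finite_shattered_sets shattered_sets_mono restr_set_mono) auto
  also have "\<dots> = (k - 1) * card ?T + card ?C"
    by simp
  also have "\<dots> \<le> (k - 1) * (card ?T + card ?C)"
    using mult_le_mono1[of 1 "k - 1" "card ?C"] assms(3) by (auto simp: distrib_left)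
  also have "\<dots> \<le> (k - 1) * t"
    unfolding t_def using assms by (intro mult_le_mono2 card_shattered_sets_insert_ge) auto
  finally have sum: "sum f {1..k} \<le> (k - 1) * t" .
  obtain v where v: "v \<in> {1..k}" "f v = Min (f ` {1..k})"
    using assms(3) Min_in[of "f ` {1..k}"] by fastforce
  have "k * f v \<le> (k - 1) * t"
    using card_Min_le_sum[of "{1..k}" f] sum v(2) by simp
  then have "real (k * f v) \<le> real ((k - 1) * t)"
    by (rule of_nat_mono)
  then have "real k * real (f v) \<le> (real k - 1) * real t"
    using assms(3) by (simp add: of_nat_diff)
  with v(1) show ?thesis
    using assms(3) unfolding f_def t_def by (auto simp: field_simps)
qed

(* I \<subseteq> {1..k}^Z indexes the subfamily {cover_set k Z i | i \<in> I} of U; on the cube,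
   x \<in> cover_set k Z i iff x z \<noteq> i z for every z \<in> Z. *)
definition covers :: "nat \<Rightarrow> 'a set \<Rightarrow> ('a \<Rightarrow> nat) set \<Rightarrow> ('a \<Rightarrow> nat) set \<Rightarrow> bool" where
  "covers k Z I S \<longleftrightarrow> I \<subseteq> PiE Z (\<lambda>_. {1..k}) \<and> (\<forall>x\<in>S. \<exists>i\<in>I. \<forall>z\<in>Z. x z \<noteq> i z)"

lemma finite_covers: "finite Z \<Longrightarrow> covers k Z I S \<Longrightarrow> finite I"
  unfolding covers_def by (metis finite_PiE finite_atLeastAtMost finite_subset)

lemma covers_insert:
  assumes "z \<notin> Z" "v \<in> {1..k}" "w \<in> {1..k}" "w \<noteq> v"
    and eq: "covers k Z I\<^sub>e\<^sub>q (restr_set {x\<in>S. x z = v} Z)"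
    and neq: "covers k Z I\<^sub>n\<^sub>e\<^sub>q (restr_set {x\<in>S. x z \<noteq> v} Z)"
  shows "covers k (insert z Z) ((\<lambda>i. i(z := w)) ` I\<^sub>e\<^sub>q \<union> (\<lambda>i. i(z := v)) ` I\<^sub>n\<^sub>e\<^sub>q) S"
  unfolding covers_def
proof
  show "(\<lambda>i. i(z := w)) ` I\<^sub>e\<^sub>q \<union> (\<lambda>i. i(z := v)) ` I\<^sub>n\<^sub>e\<^sub>q \<subseteq> PiE (insert z Z) (\<lambda>_. {1..k})"
    using eq neq assms(2,3) by (auto simp: covers_def intro!: PiE_fun_upd)
  show "\<forall>x\<in>S. \<exists>i\<in>(\<lambda>i. i(z := w)) ` I\<^sub>e\<^sub>q \<union> (\<lambda>i. i(z := v)) ` I\<^sub>n\<^sub>e\<^sub>q. \<forall>u\<in>insert z Z. x u \<noteq> i u"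
  proof
    fix x assume "x \<in> S"
    show "\<exists>i\<in>(\<lambda>i. i(z := w)) ` I\<^sub>e\<^sub>q \<union> (\<lambda>i. i(z := v)) ` I\<^sub>n\<^sub>e\<^sub>q. \<forall>u\<in>insert z Z. x u \<noteq> i u"
    proof (cases "x z = v")
      case True
      then have "restrict x Z \<in> restr_set {x\<in>S. x z = v} Z"
        using \<open>x \<in> S\<close> by (auto simp: restr_set_def)
      then obtain i where "i \<in> I\<^sub>e\<^sub>q" "\<forall>u\<in>Z. x u \<noteq> i u"
        using eq by (auto simp: covers_def)
      then show ?thesis
        using True assms(1,4) by (intro bexI[of _ "i(z := w)"]) auto
    next
      case False
      then have "restrict x Z \<in> restr_set {x\<in>S. x z \<noteq> v} Z"
        using \<open>x \<in> S\<close> by (auto simp: restr_set_def)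
      then obtain i where "i \<in> I\<^sub>n\<^sub>e\<^sub>q" "\<forall>u\<in>Z. x u \<noteq> i u"
        using neq by (auto simp: covers_def)
      then show ?thesis
        using False assms(1) by (intro bexI[of _ "i(z := v)"]) auto
    qed
  qed
qed

lemma ex_covers_insert:
  assumes "finite Z" "z \<notin> Z" "k \<ge> 2" "v \<in> {1..k}"
    and eq: "covers k Z I\<^sub>e\<^sub>q (restr_set {x\<in>S. x z = v} Z)"
    and neq: "covers k Z I\<^sub>n\<^sub>e\<^sub>q (restr_set {x\<in>S. x z \<noteq> v} Z)"
  shows "\<exists>I. covers k (insert z Z) I S \<and> card I \<le> card I\<^sub>e\<^sub>q + card I\<^sub>n\<^sub>e\<^sub>q"
proof -
  obtain w where w: "w \<in> {1..k}" "w \<noteq> v"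
  proof
    show "(if v = 1 then 2 else 1) \<in> {1..k}" "(if v = 1 then 2 else 1) \<noteq> v"
      using assms(3) by auto
  qed
  have "finite I\<^sub>e\<^sub>q" "finite I\<^sub>n\<^sub>e\<^sub>q"
    using eq neq assms(1) by (auto intro: finite_covers)
  then have "card ((\<lambda>i. i(z := w)) ` I\<^sub>e\<^sub>q \<union> (\<lambda>i. i(z := v)) ` I\<^sub>n\<^sub>e\<^sub>q) \<le> card I\<^sub>e\<^sub>q + card I\<^sub>n\<^sub>e\<^sub>q"
    by (intro order_trans[OF card_Un_le add_mono] card_image_le)
  with covers_insert[OF assms(2,4) w eq neq] show ?thesis
    by blast
qed

lemma ex_covers_card_le:
  fixes S :: "('a \<Rightarrow> nat) set" and \<gamma> :: nat
  assumes "k \<ge> 2" and "finite Z"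
  shows "\<exists>I. covers k Z I S \<and> real (card I)
    \<le> real (card (shattered_sets k Z S)) ^ \<gamma> * (1 + ((real k - 1) / real k) ^ \<gamma>) ^ card Z"
  using assms(2)
proof (induction Z arbitrary: S rule: finite_induct)
  case empty
  show ?case
  proof (cases "S = {}")
    case True
    then show ?thesis by (intro exI[of _ "{}"]) (simp add: covers_def)
  next
    case False
    then show ?thesis
      by (intro exI[of _ "{\<lambda>_. undefined}"]) (auto simp: covers_def shattered_sets_empty)
  qed
next
  case (insert z Z S)
  define \<theta> where "\<theta> = (real k - 1) / real k"
  define q where "q = 1 + \<theta> ^ \<gamma>"
  define t where "t = real (card (shattered_sets k (insert z Z) S))"
  obtain v where v: "v \<in> {1..k}"
    and few: "real (card (shattered_sets k Z (restr_set {x\<in>S. x z = v} Z))) \<le> \<theta> * t"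
    using ex_fibre_few_shattered_sets[OF insert.hyps assms(1)] unfolding \<theta>_def t_def by blast
  define s\<^sub>e\<^sub>q where "s\<^sub>e\<^sub>q = real (card (shattered_sets k Z (restr_set {x\<in>S. x z = v} Z)))"
  define s\<^sub>n\<^sub>e\<^sub>q where "s\<^sub>n\<^sub>e\<^sub>q = real (card (shattered_sets k Z (restr_set {x\<in>S. x z \<noteq> v} Z)))"
  have "shattered_sets k Z (restr_set {x\<in>S. x z \<noteq> v} Z) \<subseteq> shattered_sets k (insert z Z) S"
    by (rule shattered_sets_restr_subset) auto
  then have rest: "s\<^sub>n\<^sub>e\<^sub>q \<le> t"
    unfolding s\<^sub>n\<^sub>e\<^sub>q_def t_def using insert.hyps(1) by (simp add: card_mono finite_shattered_sets)
  obtain I\<^sub>e\<^sub>q where I\<^sub>e\<^sub>q: "covers k Z I\<^sub>e\<^sub>q (restr_set {x\<in>S. x z = v} Z)"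
    "real (card I\<^sub>e\<^sub>q) \<le> s\<^sub>e\<^sub>q ^ \<gamma> * q ^ card Z"
    using insert.IH unfolding s\<^sub>e\<^sub>q_def q_def \<theta>_def by blast
  obtain I\<^sub>n\<^sub>e\<^sub>q where I\<^sub>n\<^sub>e\<^sub>q: "covers k Z I\<^sub>n\<^sub>e\<^sub>q (restr_set {x\<in>S. x z \<noteq> v} Z)"
    "real (card I\<^sub>n\<^sub>e\<^sub>q) \<le> s\<^sub>n\<^sub>e\<^sub>q ^ \<gamma> * q ^ card Z"
    using insert.IH unfolding s\<^sub>n\<^sub>e\<^sub>q_def q_def \<theta>_def by blast
  obtain I where I: "covers k (insert z Z) I S" "card I \<le> card I\<^sub>e\<^sub>q + card I\<^sub>n\<^sub>e\<^sub>q"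
    using ex_covers_insert[OF insert.hyps assms(1) v I\<^sub>e\<^sub>q(1) I\<^sub>n\<^sub>e\<^sub>q(1)] by blast
  have "0 \<le> q" using assms(1) by (simp add: q_def \<theta>_def)
  then have "s\<^sub>e\<^sub>q ^ \<gamma> * q ^ card Z \<le> (\<theta> * t) ^ \<gamma> * q ^ card Z"
    and "s\<^sub>n\<^sub>e\<^sub>q ^ \<gamma> * q ^ card Z \<le> t ^ \<gamma> * q ^ card Z"
    using few rest by (auto intro!: mult_right_mono power_mono simp: s\<^sub>e\<^sub>q_def s\<^sub>n\<^sub>e\<^sub>q_def)
  then have "real (card I) \<le> (\<theta> * t) ^ \<gamma> * q ^ card Z + t ^ \<gamma> * q ^ card Z"
    using I(2) I\<^sub>e\<^sub>q(2) I\<^sub>n\<^sub>e\<^sub>q(2) by linarith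
  also have "\<dots> = t ^ \<gamma> * q ^ card (insert z Z)"
    using insert.hyps by (simp add: q_def power_mult_distrib algebra_simps)
  finally show ?case
    using I(1) unfolding t_def q_def \<theta>_def by blast
qed

lemma F_num_le_card:
  assumes "finite Z" "S \<subseteq> cube k Z" "covers k Z I S"
  shows "F_num k Z S \<le> card I"
proof -
  have "cover_set k Z ` I \<subseteq> cover_U k Z"
    using assms(3) by (auto simp: covers_def cover_U_def)
  moreover have "S \<subseteq> \<Union> (cover_set k Z ` I)"
    using assms(2,3) by (fastforce simp: covers_def cover_set_def cube_def PiE_iff)
  moreover have "finite I"
    using assms(1,3) by (rule finite_covers)
  ultimately have "F_num k Z S \<le> card (cover_set k Z ` I)"
    unfolding F_num_def by (intro Least_le) blast
  also have "\<dots> \<le> card I"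
    using \<open>finite I\<close> by (rule card_image_le)
  finally show ?thesis .
qed

lemma F_num_less_if_shattered_sets_small:
  fixes y c K :: real and \<gamma> :: nat
  assumes "k \<ge> 2" "finite Z" "S \<subseteq> cube k Z" "0 < y" "y \<le> 1" "\<gamma> > 0"
    and small: "\<And>W. W \<in> shattered_sets k Z S \<Longrightarrow> real (card W) < c * real (card Z)"
    and base: "(1 + y) ^ \<gamma> / y powr (c * \<gamma>) * (1 + ((real k - 1) / real k) ^ \<gamma>) < K"
  shows "real (F_num k Z S) < K ^ card Z"
proof -
  define n where "n = card Z"
  define q where "q = 1 + ((real k - 1) / real k) ^ \<gamma>"
  define s where "s = real (card (shattered_sets k Z S))"
  obtain I where I: "covers k Z I S" "real (card I) \<le> s ^ \<gamma> * q ^ n"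
    using ex_covers_card_le[OF assms(1,2)] unfolding s_def q_def n_def by blast
  have F: "real (F_num k Z S) \<le> s ^ \<gamma> * q ^ n"
    using F_num_le_card[OF assms(2,3) I(1)] I(2) by linarith
  have q: "0 \<le> q" using assms(1) by (simp add: q_def)
  show ?thesis
  proof (cases "n = 0")
    case True
    then have "shattered_sets k Z S = {}" using small by (fastforce simp: n_def)
    then show ?thesis using F True assms(6) by (simp add: s_def n_def zero_power)
  next
    case False
    have "s \<le> (1 + y) ^ n / y powr (c * n)"
      unfolding s_def n_def using assms(2,4,5) small
      by (intro card_small_subsets_le) (auto simp: shattered_sets_def less_imp_le)
    then have "s ^ \<gamma> \<le> ((1 + y) ^ n / y powr (c * n)) ^ \<gamma>"
      by (rule power_mono) (simp add: s_def)
    also have "\<dots> = ((1 + y) ^ \<gamma>) ^ n / (y powr (c * \<gamma>)) ^ n"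
      using assms(4) by (simp add: power_divide powr_power mult_ac flip: power_mult)
    finally have s: "s ^ \<gamma> \<le> ((1 + y) ^ \<gamma> / y powr (c * \<gamma>)) ^ n"
      by (simp add: power_divide)
    have "real (F_num k Z S) \<le> s ^ \<gamma> * q ^ n"
      by (rule F)
    also have "\<dots> \<le> ((1 + y) ^ \<gamma> / y powr (c * \<gamma>)) ^ n * q ^ n"
      using s q by (simp add: mult_right_mono)
    also have "\<dots> = ((1 + y) ^ \<gamma> / y powr (c * \<gamma>) * q) ^ n"
      by (rule power_mult_distrib[symmetric])
    also have "\<dots> < K ^ n"
      using base False assms(4) q by (intro power_strict_mono) (simp_all add: q_def)
    finally show ?thesis by (simp add: n_def)
  qed
qed

lemma ex_small_cover_parameters:
  fixes \<theta> K :: real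
  assumes "0 \<le> \<theta>" "\<theta> < 1" "1 < K"
  shows "\<exists>\<gamma>::nat. \<exists>y c::real. \<gamma> > 0 \<and> 0 < y \<and> y < 1 \<and> 0 < c \<and>
           (1 + y) ^ \<gamma> / y powr (c * real \<gamma>) * (1 + \<theta> ^ \<gamma>) < K"
proof -
  \<comment> \<open>each of the three factors is made smaller than the cube root of K\<close>
  define \<rho> where "\<rho> = K powr (1/3)"
  have \<rho>: "1 < \<rho>" "\<rho> * \<rho> * \<rho> = K"
    using assms(3) by (simp_all add: \<rho>_def flip: powr_add)
  have "eventually (\<lambda>n. \<theta> ^ n < \<rho> - 1) sequentially"
    using assms(1,2) \<rho>(1) by (intro order_tendstoD(2)[OF LIMSEQ_power_zero]) auto
  then obtain N where N: "\<And>n. n \<ge> N \<Longrightarrow> \<theta> ^ n < \<rho> - 1"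
    by (auto simp: eventually_sequentially)
  define \<gamma> where "\<gamma> = Suc N"
  have "((\<lambda>y. (1 + y) ^ \<gamma>) \<longlongrightarrow> (1 + 0) ^ \<gamma>) (at_right (0::real))"
    by (intro tendsto_intros)
  then have "eventually (\<lambda>y. (1 + y) ^ \<gamma> < \<rho>) (at_right 0)"
    using \<rho>(1) by (intro order_tendstoD(2)) auto
  moreover have "eventually (\<lambda>y. 0 < y \<and> y < 1) (at_right (0::real))"
    by (auto simp: eventually_at_right_field intro: exI[of _ 1])
  ultimately have "eventually (\<lambda>y. (1 + y) ^ \<gamma> < \<rho> \<and> 0 < y \<and> y < 1) (at_right 0)"
    by (rule eventually_conj)
  then obtain y where y: "0 < y" "y < 1" "(1 + y) ^ \<gamma> < \<rho>"
    using eventually_happens'[OF trivial_limit_at_right_real] by blast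
  have "ln y < 0" using y(1,2) by simp
  define c where "c = - ln \<rho> / (\<gamma> * ln y)"
  have "0 < ln \<rho>" "real \<gamma> * ln y < 0"
    using \<rho>(1) \<open>ln y < 0\<close> by (simp_all add: \<gamma>_def mult_pos_neg)
  then have c: "0 < c"
    by (simp add: c_def divide_pos_neg)
  have "c * \<gamma> * ln y = - ln \<rho>"
    using \<open>ln y < 0\<close> by (simp add: c_def \<gamma>_def)
  then have "y powr (c * \<gamma>) = 1 / \<rho>"
    using \<rho>(1) y(1) by (simp add: powr_def exp_minus inverse_eq_divide)
  then have "(1 + y) ^ \<gamma> / y powr (c * \<gamma>) * (1 + \<theta> ^ \<gamma>) = (1 + y) ^ \<gamma> * \<rho> * (1 + \<theta> ^ \<gamma>)"
    by simp
  also have "\<dots> < \<rho> * \<rho> * \<rho>"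
  proof (rule mult_strict_mono)
    show "(1 + y) ^ \<gamma> * \<rho> < \<rho> * \<rho>" using y(3) \<rho>(1) by simp
    show "1 + \<theta> ^ \<gamma> < \<rho>" using N[of \<gamma>] by (simp add: \<gamma>_def)
  qed (use \<rho>(1) assms(1) in simp_all)
  finally have "(1 + y) ^ \<gamma> / y powr (c * \<gamma>) * (1 + \<theta> ^ \<gamma>) < K"
    using \<rho>(2) by simp
  moreover have "\<gamma> > 0" by (simp add: \<gamma>_def)
  ultimately show ?thesis
    using y(1,2) c by blast
qed

theorem lemma3p3:
  fixes k :: nat and b :: real
  assumes "k \<ge> 2" and "b > 0"
  shows "\<exists>c::real. c > 0 \<and>
    (\<forall>(Z::nat set) S. finite Z \<longrightarrow> S \<subseteq> cube k Z \<longrightarrow>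
       real (F_num k Z S) \<ge> real k powr (b * real (card Z)) \<longrightarrow>
       (\<exists>W. W \<subseteq> Z \<and> real (card W) \<ge> c * real (card Z) \<and>
            PiE W (\<lambda>_. {1..k}) \<subseteq> restr_set S W))"
proof -
  define K where "K = real k powr b"
  have "1 < K" using assms by (simp add: K_def)
  moreover have "0 \<le> (real k - 1) / real k" "(real k - 1) / real k < 1"
    using assms(1) by simp_all
  ultimately obtain \<gamma> :: nat and y c :: real where
    "\<gamma> > 0" "0 < y" "y < 1" "0 < c"
    and base: "(1 + y) ^ \<gamma> / y powr (c * \<gamma>) * (1 + ((real k - 1) / real k) ^ \<gamma>) < K"
    using ex_small_cover_parameters by blast
  show ?thesis
  proof (intro exI[of _ c] conjI allI impI)
    fix Z :: "nat set" and S
    assume Z: "finite Z" and S: "S \<subseteq> cube k Z"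
      and F: "real k powr (b * real (card Z)) \<le> real (F_num k Z S)"
    show "\<exists>W. W \<subseteq> Z \<and> c * real (card Z) \<le> real (card W) \<and> PiE W (\<lambda>_. {1..k}) \<subseteq> restr_set S W"
    proof (rule ccontr)
      assume "\<not> ?thesis"
      then have "\<And>W. W \<in> shattered_sets k Z S \<Longrightarrow> real (card W) < c * real (card Z)"
        by (force simp: shattered_sets_def not_le[symmetric])
      then have "real (F_num k Z S) < K ^ card Z"
        using \<open>0 < y\<close> \<open>y < 1\<close> \<open>\<gamma> > 0\<close> base
        by (intro F_num_less_if_shattered_sets_small[OF assms(1) Z S]) auto
      also have "K ^ card Z = real k powr (b * real (card Z))"
        using assms(1) by (simp add: K_def powr_powr flip: powr_realpow)
      finally show False using F by simp
    qed
  qed (rule \<open>0 < c\<close>)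
qed

end
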